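(* For $1\le t\le m$, any deterministic voting rule that takes top-$t$ preference profiles as input and has bounded utilitarian distortion has metric distortion $\Omega(m-t+1)$.
   Context: Setting: $n$ agents, $m$ alternatives; each agent has an underlying strict ranking, but the rule only receives each agent's ordered list of her top $t$ alternatives (a top-$t$ profile $\vec\sigma_t$). A full profile extends $\vec\sigma_t$ if each agent's top-$t$ prefix coincides with that in $\vec\sigma_t$. Metric framework: a pseudometric $d$ on agents and alternatives is consistent with a full profile $\vec\sigma$ if $X\succ_iY\Rightarrow d(i,X)\le d(i,Y)$, and consistent with $\vec\sigma_t$ if it is consistent with some full profile extending $\vec\sigma_t$. $\mathrm{SC}(X,d)=\sum_id(i,X)$. Metric distortion of a (top-$t$) rule $f$: $\sup_{\vec\sigma_t}\sup_{d}\mathbb E_{X\sim f(\vec\sigma_t)}[\mathrm{SC}(X,d)]/\min_X\mathrm{SC}(X,d)$ over consistent $d$. Utilitarian framework: unit-sum nonnegative utilities $u_i$ ($\sum_Xu_i(X)=1$), consistent with a full profile if $X\succ_iY\Rightarrow u_i(X)\ge u_i(Y)$ and with $\vec\sigma_t$ if consistent with some full extension. $\mathrm{SW}(X,\vec u)=\sum_iu_i(X)$. Utilitarian distortion: $\sup_{\vec\sigma_t}\sup_{\vec u}\max_X\mathrm{SW}(X,\vec u)/\mathbb E_{X\sim f(\vec\sigma_t)}[\mathrm{SW}(X,\vec u)]$; it is bounded if finite. *)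

theory Defs
  imports "HOL-Analysis.Analysis"
begin

(* Alternatives are 0..<m (nat); agents are 0..<n where n = length of the profile.
   A ranking is a list, most preferred first. *)

definition top_list :: "nat \<Rightarrow> nat \<Rightarrow> nat list \<Rightarrow> bool" where
  "top_list m t r \<longleftrightarrow> length r = t \<and> distinct r \<and> set r \<subseteq> {..<m}"

definition full_ranking :: "nat \<Rightarrow> nat list \<Rightarrow> bool" where
  "full_ranking m r \<longleftrightarrow> distinct r \<and> set r = {..<m}"

definition top_profile :: "nat \<Rightarrow> nat \<Rightarrow> nat list list \<Rightarrow> bool" where
  "top_profile m t P \<longleftrightarrow> P \<noteq> [] \<and> (\<forall>r\<in>set P. top_list m t r)"

definition extends_profile :: "nat \<Rightarrow> nat \<Rightarrow> nat list list \<Rightarrow> nat list list \<Rightarrow> bool" where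
  "extends_profile m t F P \<longleftrightarrow> length F = length P \<and>
     (\<forall>i<length P. full_ranking m (F!i) \<and> take t (F!i) = P!i)"

definition prefers :: "nat list \<Rightarrow> nat \<Rightarrow> nat \<Rightarrow> bool" where
  "prefers r X Y \<longleftrightarrow> (\<exists>a b. a < b \<and> b < length r \<and> r!a = X \<and> r!b = Y)"

(* points: Inl i = agent i, Inr X = alternative X *)
definition points :: "nat \<Rightarrow> nat \<Rightarrow> (nat + nat) set" where
  "points n m = Inl ` {..<n} \<union> Inr ` {..<m}"

definition pseudometric_on :: "'p set \<Rightarrow> ('p \<Rightarrow> 'p \<Rightarrow> real) \<Rightarrow> bool" where
  "pseudometric_on S d \<longleftrightarrow>
     (\<forall>x\<in>S. d x x = 0) \<and>
     (\<forall>x\<in>S. \<forall>y\<in>S. 0 \<le> d x y \<and> d x y = d y x) \<and>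
     (\<forall>x\<in>S. \<forall>y\<in>S. \<forall>z\<in>S. d x z \<le> d x y + d y z)"

definition metric_consistent_full :: "nat list list \<Rightarrow> (nat + nat \<Rightarrow> nat + nat \<Rightarrow> real) \<Rightarrow> bool" where
  "metric_consistent_full F d \<longleftrightarrow>
     (\<forall>i<length F. \<forall>X Y. prefers (F!i) X Y \<longrightarrow> d (Inl i) (Inr X) \<le> d (Inl i) (Inr Y))"

definition metric_consistent :: "nat \<Rightarrow> nat \<Rightarrow> nat list list \<Rightarrow> (nat + nat \<Rightarrow> nat + nat \<Rightarrow> real) \<Rightarrow> bool" where
  "metric_consistent m t P d \<longleftrightarrow> pseudometric_on (points (length P) m) d \<and>
     (\<exists>F. extends_profile m t F P \<and> metric_consistent_full F d)"

definition SC :: "nat list list \<Rightarrow> (nat + nat \<Rightarrow> nat + nat \<Rightarrow> real) \<Rightarrow> nat \<Rightarrow> real" where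
  "SC P d X = (\<Sum>i<length P. d (Inl i) (Inr X))"

definition ratio :: "real \<Rightarrow> real \<Rightarrow> ereal" where
  "ratio a b = (if b = 0 then (if a = 0 then 1 else \<infinity>) else ereal (a / b))"

definition metric_distortion :: "nat \<Rightarrow> nat \<Rightarrow> (nat list list \<Rightarrow> nat) \<Rightarrow> ereal" where
  "metric_distortion m t f = (SUP (P, d) \<in> {(P, d). top_profile m t P \<and> metric_consistent m t P d}.
      ratio (SC P d (f P)) (Min (SC P d ` {..<m})))"

definition util_consistent :: "nat \<Rightarrow> nat \<Rightarrow> nat list list \<Rightarrow> (nat \<Rightarrow> nat \<Rightarrow> real) \<Rightarrow> bool" where
  "util_consistent m t P u \<longleftrightarrow>
     (\<forall>i<length P. (\<forall>X<m. 0 \<le> u i X) \<and> (\<Sum>X<m. u i X) = 1) \<and>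
     (\<exists>F. extends_profile m t F P \<and>
        (\<forall>i<length P. \<forall>X Y. prefers (F!i) X Y \<longrightarrow> u i Y \<le> u i X))"

definition SW :: "nat list list \<Rightarrow> (nat \<Rightarrow> nat \<Rightarrow> real) \<Rightarrow> nat \<Rightarrow> real" where
  "SW P u X = (\<Sum>i<length P. u i X)"

definition util_distortion :: "nat \<Rightarrow> nat \<Rightarrow> (nat list list \<Rightarrow> nat) \<Rightarrow> ereal" where
  "util_distortion m t f = (SUP (P, u) \<in> {(P, u). top_profile m t P \<and> util_consistent m t P u}.
      ratio (Max (SW P u ` {..<m})) (SW P u (f P)))"

end

theory Submission
  imports Defs
begin

text \<open>Let \<open>k = m - t + 1\<close> and let agent \<open>j < k\<close> rank \<open>j\<close> first, followed by the same
  \<open>t - 1\<close> alternatives \<open>k, \<dots>, m - 1\<close>. A rule of bounded utilitarian distortion must elect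
  some agent's top choice, since otherwise all utility may sit on the top choices and the
  winner has welfare 0. So it elects some \<open>j < k\<close>, and \<open>j\<close> appears in no other agent's list.
  Placing agent \<open>j\<close> and alternative \<open>j\<close> at point 1 and everything else at point 0 is
  consistent with the profile when \<open>j\<close> is ranked last by all other agents; then \<open>j\<close> has
  social cost \<open>k - 1\<close> while every other alternative has cost 1.\<close>

definition complete_ranking :: "nat list \<Rightarrow> nat list \<Rightarrow> nat list" where
  "complete_ranking L r = r @ filter (\<lambda>x. x \<notin> set r) L"

lemma full_ranking_complete_ranking:
  assumes "top_list m t r" "distinct L" "set L = {..<m}"
  shows "full_ranking m (complete_ranking L r)" "take t (complete_ranking L r) = r"
  using assms by (auto simp: complete_ranking_def top_list_def full_ranking_def)

lemma top_profile_nth: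
  assumes "top_profile m t P" "i < length P"
  shows "top_list m t (P ! i)"
  using assms nth_mem by (auto simp: top_profile_def)

lemma extends_profile_complete_ranking:
  assumes "top_profile m t P" "distinct L" "set L = {..<m}"
  shows "extends_profile m t (map (complete_ranking L) P) P"
  using top_profile_nth[OF assms(1)] full_ranking_complete_ranking[OF _ assms(2,3)]
  by (auto simp: extends_profile_def)

lemma hd_top_list:
  assumes "top_list m t r" "1 \<le> t"
  shows "hd r \<in> set r" "hd r < m"
proof -
  have "r \<noteq> []" using assms by (auto simp: top_list_def)
  then show "hd r \<in> set r" by simp
  with assms(1) show "hd r < m" by (auto simp: top_list_def)
qed

lemma distinct_extension:
  assumes "extends_profile m t F P" "i < length P"
  shows "distinct (F ! i)"
  using assms by (auto simp: extends_profile_def full_ranking_def)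

lemma hd_extension:
  assumes "extends_profile m t F P" "1 \<le> t" "i < length P"
  shows "hd (F ! i) = hd (P ! i)"
  using assms hd_take[of t "F ! i"] by (auto simp: extends_profile_def)

lemma prefers_imp_not_hd:
  assumes "distinct r" "prefers r X Y"
  shows "Y \<noteq> hd r"
proof
  assume "Y = hd r"
  obtain a b where "a < b" "b < length r" "r ! b = Y"
    using assms(2) by (auto simp: prefers_def)
  moreover have "0 < length r" "hd r = r ! 0"
    using \<open>b < length r\<close> by (auto intro: hd_conv_nth)
  ultimately show False
    using \<open>Y = hd r\<close> nth_eq_iff_index_eq[OF assms(1), of b 0] by simp
qed

lemma prefers_imp_not_last:
  assumes "distinct r" "prefers r X Y"
  shows "X \<noteq> last r"
proof
  assume "X = last r"
  obtain a b where "a < b" "b < length r" "r ! a = X"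
    using assms(2) by (auto simp: prefers_def)
  moreover have "last r = r ! (length r - 1)"
    using \<open>b < length r\<close> by (intro last_conv_nth) auto
  ultimately show False
    using \<open>X = last r\<close> assms(1) by (auto simp: nth_eq_iff_index_eq)
qed

lemma pseudometric_on_abs_diff: "pseudometric_on S (\<lambda>p q. \<bar>g p - g q\<bar>)"
  by (auto simp: pseudometric_on_def)

lemma ratio_le_metric_distortion:
  assumes "top_profile m t P" "metric_consistent m t P d"
  shows "ratio (SC P d (f P)) (Min (SC P d ` {..<m})) \<le> metric_distortion m t f"
  unfolding metric_distortion_def by (rule SUP_upper2[where i="(P, d)"]) (use assms in auto)

lemma ratio_le_util_distortion:
  assumes "top_profile m t P" "util_consistent m t P u"
  shows "ratio (Max (SW P u ` {..<m})) (SW P u (f P)) \<le> util_distortion m t f"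
  unfolding util_distortion_def by (rule SUP_upper2[where i="(P, u)"]) (use assms in auto)

lemma util_distortion_finite_imp_winner_top:
  assumes finite: "util_distortion m t f < \<infinity>" and P: "top_profile m t P" and "1 \<le> t"
  shows "\<exists>i<length P. hd (P ! i) = f P"
proof (rule ccontr)
  assume no_top: "\<not> (\<exists>i<length P. hd (P ! i) = f P)"
  define u :: "nat \<Rightarrow> nat \<Rightarrow> real" where "u i X = (if X = hd (P ! i) then 1 else 0)" for i X
  have top_lt: "hd (P ! i) < m" if "i < length P" for i
    using hd_top_list[OF top_profile_nth[OF P that] \<open>1 \<le> t\<close>] by simp
  define F where "F = map (complete_ranking [0..<m]) P"
  have ext: "extends_profile m t F P"
    unfolding F_def by (rule extends_profile_complete_ranking[OF P]) auto
  have ordered: "\<forall>i<length P. \<forall>X Y. prefers (F ! i) X Y \<longrightarrow> u i Y \<le> u i X"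
    using prefers_imp_not_hd[OF distinct_extension[OF ext]] hd_extension[OF ext \<open>1 \<le> t\<close>]
    by (fastforce simp: u_def)
  have "\<forall>i<length P. (\<forall>X<m. 0 \<le> u i X) \<and> (\<Sum>X<m. u i X) = 1"
    using top_lt by (simp add: u_def)
  with ext ordered have consistent: "util_consistent m t P u"
    unfolding util_consistent_def by blast
  have "SW P u (f P) = 0"
    using no_top by (auto simp: SW_def u_def intro!: sum.neutral)
  moreover have "1 \<le> Max (SW P u ` {..<m})"
  proof -
    have "0 < length P" using P by (simp add: top_profile_def)
    then have "1 \<le> SW P u (hd (P ! 0))"
      unfolding SW_def using member_le_sum[of 0 "{..<length P}" "\<lambda>i. u i (hd (P ! 0))"]
      by (simp add: u_def)
    also have "\<dots> \<le> Max (SW P u ` {..<m})"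
      using top_lt \<open>0 < length P\<close> by (intro Max_ge) auto
    finally show ?thesis .
  qed
  ultimately have "ratio (Max (SW P u ` {..<m})) (SW P u (f P)) = \<infinity>"
    by (simp add: ratio_def)
  with ratio_le_util_distortion[OF P consistent, of f] finite show False
    by simp
qed

lemma metric_distortion_ge_sole_top:
  assumes P: "top_profile m t P" "1 \<le> t" "2 \<le> length P"
    and a: "a < length P" "hd (P ! a) = f P"
    and absent: "\<And>i. i < length P \<Longrightarrow> i \<noteq> a \<Longrightarrow> f P \<notin> set (P ! i)"
  shows "ereal (real (length P) - 1) \<le> metric_distortion m t f"
proof -
  define w where "w = f P"
  define d :: "nat + nat \<Rightarrow> nat + nat \<Rightarrow> real"
    where "d p q = \<bar>indicator {Inl a, Inr w} p - indicator {Inl a, Inr w} q\<bar>" for p q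
  have d_agent: "d (Inl i) (Inr X) =
      (if i = a then (if X = w then 0 else 1) else (if X = w then 1 else 0))" for i X
    by (simp add: d_def indicator_def)
  have w: "w < m"
    using hd_top_list(2)[OF top_profile_nth[OF P(1) a(1)] P(2)] a(2) by (simp add: w_def)
  define L where "L = filter (\<lambda>x. x \<noteq> w) [0..<m] @ [w]"
  define F where "F = map (complete_ranking L) P"
  have ext: "extends_profile m t F P"
    unfolding F_def by (rule extends_profile_complete_ranking[OF P(1)]) (use w in \<open>auto simp: L_def\<close>)
  have ordered: "d (Inl i) (Inr X) \<le> d (Inl i) (Inr Y)"
    if i: "i < length P" and pref: "prefers (F ! i) X Y" for i X Y
  proof (cases "i = a")
    case True
    then have "Y \<noteq> w"
      using prefers_imp_not_hd[OF distinct_extension[OF ext i] pref] hd_extension[OF ext P(2) i] a(2)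
      by (simp add: w_def)
    with True show ?thesis by (simp add: d_agent)
  next
    case False
    then have "last (F ! i) = w"
      using absent[OF i] i by (simp add: F_def complete_ranking_def L_def w_def)
    then have "X \<noteq> w"
      using prefers_imp_not_last[OF distinct_extension[OF ext i] pref] by simp
    with False show ?thesis by (simp add: d_agent)
  qed
  have "pseudometric_on (points (length P) m) d"
    unfolding d_def by (rule pseudometric_on_abs_diff)
  moreover have "metric_consistent_full F d"
    using ordered by (simp add: metric_consistent_full_def F_def)
  ultimately have consistent: "metric_consistent m t P d"
    using ext by (auto simp: metric_consistent_def)
  have SC_winner: "SC P d w = real (length P) - 1"
    using a(1) by (simp add: SC_def d_agent sum.If_cases card_Diff_singleton of_nat_diff flip: Diff_eq)
  have SC_other: "SC P d X = 1" if "X \<noteq> w" for X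
    using a(1) that by (simp add: SC_def d_agent)
  define b where "b = (if a = 0 then 1 else 0 :: nat)"
  have b: "b < length P" "b \<noteq> a"
    using P(3) by (auto simp: b_def)
  have "hd (P ! b) < m" "hd (P ! b) \<noteq> w"
    using hd_top_list[OF top_profile_nth[OF P(1) b(1)] P(2)] absent[OF b] by (auto simp: w_def)
  then have "1 \<in> SC P d ` {..<m}"
    using SC_other[of "hd (P ! b)"] by force
  moreover have "1 \<le> SC P d X" for X
    using SC_winner SC_other P(3) by (cases "X = w") auto
  ultimately have "Min (SC P d ` {..<m}) = 1"
    by (intro Min_eqI) auto
  then have "ratio (SC P d (f P)) (Min (SC P d ` {..<m})) = ereal (real (length P) - 1)"
    by (simp add: ratio_def SC_winner flip: w_def)
  with ratio_le_metric_distortion[OF P(1) consistent, of f] show ?thesis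
    by simp
qed

lemma one_le_metric_distortion:
  assumes P: "top_profile m t P" and "0 < m"
  shows "1 \<le> metric_distortion m t f"
proof -
  define d :: "nat + nat \<Rightarrow> nat + nat \<Rightarrow> real" where "d p q = 0" for p q
  have "extends_profile m t (map (complete_ranking [0..<m]) P) P"
    by (rule extends_profile_complete_ranking[OF P]) auto
  then have consistent: "metric_consistent m t P d"
    by (auto simp: metric_consistent_def metric_consistent_full_def pseudometric_on_def d_def)
  have "SC P d ` {..<m} = {0}"
    using \<open>0 < m\<close> by (auto simp: SC_def d_def)
  then have "ratio (SC P d (f P)) (Min (SC P d ` {..<m})) = 1"
    by (simp add: SC_def d_def ratio_def)
  with ratio_le_metric_distortion[OF P consistent, of f] show ?thesis
    by simp
qed

definition shared_tail_profile :: "nat \<Rightarrow> nat \<Rightarrow> nat list list" where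
  "shared_tail_profile m t = map (\<lambda>j. j # [m - t + 1..<m]) [0..<m - t + 1]"

lemma length_shared_tail_profile: "length (shared_tail_profile m t) = m - t + 1"
  by (simp add: shared_tail_profile_def)

lemma nth_shared_tail_profile:
  "j < m - t + 1 \<Longrightarrow> shared_tail_profile m t ! j = j # [m - t + 1..<m]"
  by (simp add: shared_tail_profile_def del: upt_Suc)

lemma top_profile_shared_tail_profile:
  "1 \<le> t \<Longrightarrow> t \<le> m \<Longrightarrow> top_profile m t (shared_tail_profile m t)"
  by (auto simp: shared_tail_profile_def top_profile_def top_list_def)

theorem mainTheorem8:
  shows "\<exists>c::real. c > 0 \<and>
    (\<forall>m t (f :: nat list list \<Rightarrow> nat).
       1 \<le> t \<and> t \<le> m \<and>
       (\<forall>P. top_profile m t P \<longrightarrow> f P < m) \<and>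
       util_distortion m t f < \<infinity>
       \<longrightarrow> ereal (c * real (m - t + 1)) \<le> metric_distortion m t f)"
proof (intro exI[of _ "1/2"] conjI allI impI)
  fix m t and f :: "nat list list \<Rightarrow> nat"
  assume "1 \<le> t \<and> t \<le> m \<and> (\<forall>P. top_profile m t P \<longrightarrow> f P < m) \<and> util_distortion m t f < \<infinity>"
  then have t: "1 \<le> t" "t \<le> m" and finite: "util_distortion m t f < \<infinity>"
    by auto
  define k where "k = m - t + 1"
  define P where "P = shared_tail_profile m t"
  have P: "top_profile m t P"
    unfolding P_def using t by (rule top_profile_shared_tail_profile)
  have "ereal (max 1 (real k - 1)) \<le> metric_distortion m t f"
  proof (cases "k = 1")
    case True
    then show ?thesis
      using one_le_metric_distortion[OF P, of f] t by (simp add: one_ereal_def)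
  next
    case False
    obtain a where a: "a < k" "hd (P ! a) = f P"
      using util_distortion_finite_imp_winner_top[OF finite P t(1)]
      by (auto simp: P_def k_def length_shared_tail_profile)
    have "ereal (real k - 1) \<le> metric_distortion m t f"
      using metric_distortion_ge_sole_top[OF P t(1), of a] a False
      by (auto simp: P_def k_def length_shared_tail_profile nth_shared_tail_profile)
    then show ?thesis
      using False by (simp add: k_def)
  qed
  moreover have "1/2 * real (m - t + 1) \<le> max 1 (real k - 1)"
    by (simp add: k_def)
  ultimately show "ereal (1/2 * real (m - t + 1)) \<le> metric_distortion m t f"
    by (meson ereal_less_eq(3) order_trans)
qed (simp)

end
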